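(* Let $M_i=(E,r_i)$, $1\le i\le m$, be demi-matroids on the same finite ground set $E$ with $r_m(X)\le\cdots\le r_2(X)\le r_1(X)$ for all $X\subseteq E$ (a flag). If $\mathcal{E}_{M_1}\subseteq\mathcal{E}_{M_2}\subseteq\cdots\subseteq\mathcal{E}_{M_m}$, then $(E,\rho)$ with $\rho(X)=\sum_{i=1}^m(-1)^{i+1}r_i(X)$ is a demi-matroid.
   Context: A demi-matroid is a pair $(E,r)$ with $E$ a finite set and $r:2^E\to\mathbb{N}$ satisfying (R1) $r(\emptyset)=0$ and (R2) for every $X\subseteq E$ and $x\in E$, $r(X)\le r(X\cup\{x\})\le r(X)+1$. (Matroids are special demi-matroids.) For a demi-matroid $M=(E,r)$, $\mathcal{E}_M=\{(X,x): X\subseteq E,\ x\in X,\ r(X\setminus\{x\})=r(X)\}$. *)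

theory Defs
  imports Main
begin

definition demi_matroid :: "'a set \<Rightarrow> ('a set \<Rightarrow> nat) \<Rightarrow> bool" where
  "demi_matroid E r \<longleftrightarrow> finite E \<and> r {} = 0 \<and>
     (\<forall>X x. X \<subseteq> E \<and> x \<in> E \<longrightarrow> r X \<le> r (insert x X) \<and> r (insert x X) \<le> r X + 1)"

definition calE :: "'a set \<Rightarrow> ('a set \<Rightarrow> nat) \<Rightarrow> ('a set \<times> 'a) set" where
  "calE E r = {(X, x). X \<subseteq> E \<and> x \<in> X \<and> r (X - {x}) = r X}"

end

theory Submission
  imports Defs
begin

text \<open>Since \<open>r\<^sub>1 \<ge> r\<^sub>2 \<ge> \<dots> \<ge> 0\<close>, the alternating sum \<open>\<rho>\<close> lies between \<open>0\<close> and \<open>r\<^sub>1\<close>.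
  Adding an element \<open>x\<close> to \<open>X\<close> raises each \<open>r\<^sub>i\<close> by some \<open>d\<^sub>i \<in> {0,1}\<close>, and the chain
  condition on the sets \<open>\<E>\<^sub>M\<close> says exactly that \<open>d\<^sub>i = 0\<close> forces \<open>d\<^sub>i\<^sub>+\<^sub>1 = 0\<close>. So the
  increments are nonincreasing as well, and the increment of \<open>\<rho>\<close>, their alternating sum,
  lies between \<open>0\<close> and \<open>d\<^sub>1 \<le> 1\<close>.\<close>

lemma alternating_sum_split_first:
  fixes a :: "nat \<Rightarrow> 'b::comm_ring_1"
  shows "(\<Sum>i=1..Suc m. (-1) ^ (i + 1) * a i) = a 1 - (\<Sum>i=1..m. (-1) ^ (i + 1) * a (Suc i))"
proof -
  have "(\<Sum>i=1..Suc m. (-1) ^ (i + 1) * a i) = a 1 + (\<Sum>i=Suc 1..Suc m. (-1) ^ (i + 1) * a i)"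
    by (simp add: sum.atLeast_Suc_atMost)
  also have "(\<Sum>i=Suc 1..Suc m. (-1) ^ (i + 1) * a i) = (\<Sum>i=1..m. (-1) ^ (i + 2) * a (Suc i))"
    by (subst sum.shift_bounds_cl_Suc_ivl) simp
  finally show ?thesis
    by (simp add: sum_negf[symmetric])
qed

lemma alternating_sum_antitone_bounds:
  fixes a :: "nat \<Rightarrow> 'b::linordered_idom"
  assumes antitone: "\<And>i. 1 \<le> i \<Longrightarrow> i < m \<Longrightarrow> a (Suc i) \<le> a i"
    and nonneg: "\<And>i. 1 \<le> i \<Longrightarrow> i \<le> m \<Longrightarrow> 0 \<le> a i"
  shows "0 \<le> (\<Sum>i=1..m. (-1) ^ (i + 1) * a i)"
    and "0 < m \<Longrightarrow> (\<Sum>i=1..m. (-1) ^ (i + 1) * a i) \<le> a 1"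
proof -
  have bounds: "0 \<le> (\<Sum>i=1..m. (-1) ^ (i + 1) * a i) \<and> (\<Sum>i=1..m. (-1) ^ (i + 1) * a i) \<le> a 1"
    if "0 < m" using antitone nonneg that
  proof (induction m arbitrary: a)
    case 0
    then show ?case by simp
  next
    case (Suc m)
    show ?case
    proof (cases "m = 0")
      case True
      then show ?thesis using Suc.prems(2)[of 1] by simp
    next
      case False
      let ?tail = "\<Sum>i=1..m. (-1) ^ (i + 1) * a (Suc i)"
      have "0 \<le> ?tail \<and> ?tail \<le> a (Suc 1)"
        using Suc.IH[of "\<lambda>i. a (Suc i)"] Suc.prems(1,2) False by simp
      moreover have "a (Suc 1) \<le> a 1"
        using Suc.prems(1)[of 1] False by simp
      ultimately show ?thesis
        unfolding alternating_sum_split_first by simp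
    qed
  qed
  show "0 \<le> (\<Sum>i=1..m. (-1) ^ (i + 1) * a i)"
    using bounds by (cases "m = 0") auto
  show "0 < m \<Longrightarrow> (\<Sum>i=1..m. (-1) ^ (i + 1) * a i) \<le> a 1"
    using bounds by blast
qed

lemma demi_matroid_rank_insert:
  assumes "demi_matroid E r" "X \<subseteq> E" "x \<in> E"
  shows "r X \<le> r (insert x X)" and "r (insert x X) \<le> r X + 1"
  using assms by (auto simp: demi_matroid_def)

lemma calE_subset_rank_increment_le:
  assumes r: "demi_matroid E r" and r': "demi_matroid E r'"
    and sub: "calE E r \<subseteq> calE E r'" and X: "X \<subseteq> E" and x: "x \<in> E"
  shows "int (r' (insert x X)) - int (r' X) \<le> int (r (insert x X)) - int (r X)"
proof (cases "x \<in> X")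
  case True
  then show ?thesis by (simp add: insert_absorb)
next
  case x_new: False
  show ?thesis
  proof (cases "r (insert x X) = r X")
    case True
    then have "(insert x X, x) \<in> calE E r"
      using X x x_new by (simp add: calE_def)
    then have "(insert x X, x) \<in> calE E r'"
      using sub by blast
    then have "r' (insert x X) = r' X"
      using x_new by (simp add: calE_def)
    then show ?thesis
      using demi_matroid_rank_insert(1)[OF r X x] by simp
  next
    case False
    then show ?thesis
      using demi_matroid_rank_insert[OF r X x] demi_matroid_rank_insert[OF r' X x] by simp
  qed
qed

lemma demi_matroid_nat_of_int:
  fixes f :: "'a set \<Rightarrow> int"
  assumes "finite E" and "f {} = 0"
    and "\<And>X x. X \<subseteq> E \<Longrightarrow> x \<in> E \<Longrightarrow> f X \<le> f (insert x X) \<and> f (insert x X) \<le> f X + 1"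
  shows "demi_matroid E (\<lambda>X. nat (f X))"
  unfolding demi_matroid_def
proof (intro conjI allI impI)
  fix X x
  assume "X \<subseteq> E \<and> x \<in> E"
  then have "f X \<le> f (insert x X)" and "f (insert x X) \<le> f X + 1"
    using assms(3) by auto
  then show "nat (f X) \<le> nat (f (insert x X))" and "nat (f (insert x X)) \<le> nat (f X) + 1"
    by simp_all
qed (use assms in simp_all)

definition alternating_rank_sum :: "(nat \<Rightarrow> 'a set \<Rightarrow> nat) \<Rightarrow> nat \<Rightarrow> 'a set \<Rightarrow> int" where
  "alternating_rank_sum r m X = (\<Sum>i=1..m. (-1) ^ (i + 1) * int (r i X))"

lemma alternating_rank_sum_nonneg:
  assumes "\<And>i. 1 \<le> i \<Longrightarrow> i < m \<Longrightarrow> r (Suc i) X \<le> r i X"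
  shows "0 \<le> alternating_rank_sum r m X"
  unfolding alternating_rank_sum_def
  by (rule alternating_sum_antitone_bounds(1)) (simp_all add: assms)

lemma alternating_rank_sum_insert:
  assumes dm: "\<And>i. 1 \<le> i \<Longrightarrow> i \<le> m \<Longrightarrow> demi_matroid E (r i)"
    and chain: "\<And>i. 1 \<le> i \<Longrightarrow> i < m \<Longrightarrow> calE E (r i) \<subseteq> calE E (r (Suc i))"
    and X: "X \<subseteq> E" and x: "x \<in> E"
  shows "alternating_rank_sum r m X \<le> alternating_rank_sum r m (insert x X)"
    and "alternating_rank_sum r m (insert x X) \<le> alternating_rank_sum r m X + 1"
proof -
  define d where "d i = int (r i (insert x X)) - int (r i X)" for i
  have increment: "alternating_rank_sum r m (insert x X) - alternating_rank_sum r m X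
      = (\<Sum>i=1..m. (-1) ^ (i + 1) * d i)"
    unfolding alternating_rank_sum_def d_def by (simp add: sum_subtractf[symmetric] algebra_simps)
  have d_antitone: "d (Suc i) \<le> d i" if "1 \<le> i" "i < m" for i
    unfolding d_def using calE_subset_rank_increment_le[OF dm dm chain X x] that by simp
  have d_nonneg: "0 \<le> d i" if "1 \<le> i" "i \<le> m" for i
    unfolding d_def using demi_matroid_rank_insert(1)[OF dm X x] that by simp
  have "0 \<le> (\<Sum>i=1..m. (-1) ^ (i + 1) * d i)"
    using alternating_sum_antitone_bounds(1)[of m d] d_antitone d_nonneg by blast
  moreover have "(\<Sum>i=1..m. (-1) ^ (i + 1) * d i) \<le> 1"
  proof (cases "m = 0")
    case False
    then have "d 1 \<le> 1"
      unfolding d_def using demi_matroid_rank_insert(2)[OF dm X x, of 1] by simp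
    then show ?thesis
      using alternating_sum_antitone_bounds(2)[of m d] d_antitone d_nonneg False by fastforce
  qed simp
  ultimately show "alternating_rank_sum r m X \<le> alternating_rank_sum r m (insert x X)"
    and "alternating_rank_sum r m (insert x X) \<le> alternating_rank_sum r m X + 1"
    using increment by linarith+
qed

theorem mainTheorem2:
  fixes E :: "'a set" and r :: "nat \<Rightarrow> 'a set \<Rightarrow> nat" and m :: nat
  assumes "finite E"
    and dm: "\<forall>i\<in>{1..m}. demi_matroid E (r i)"
    and flag: "\<forall>i\<in>{1..<m}. \<forall>X. X \<subseteq> E \<longrightarrow> r (i + 1) X \<le> r i X"
    and chain: "\<forall>i\<in>{1..<m}. calE E (r i) \<subseteq> calE E (r (i + 1))"
  shows "\<exists>\<rho> :: 'a set \<Rightarrow> nat.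
           (\<forall>X. X \<subseteq> E \<longrightarrow> int (\<rho> X) = (\<Sum>i=1..m. (-1) ^ (i + 1) * int (r i X)))
           \<and> demi_matroid E \<rho>"
proof (intro exI conjI allI impI)
  have dm': "demi_matroid E (r i)" if "1 \<le> i" "i \<le> m" for i
    using dm that by simp
  have flag': "r (Suc i) X \<le> r i X" if "1 \<le> i" "i < m" "X \<subseteq> E" for i X
    using flag that by simp
  have chain': "calE E (r i) \<subseteq> calE E (r (Suc i))" if "1 \<le> i" "i < m" for i
    using chain that by simp
  let ?\<rho> = "\<lambda>X. nat (alternating_rank_sum r m X)"
  show "int (?\<rho> X) = (\<Sum>i=1..m. (-1) ^ (i + 1) * int (r i X))" if "X \<subseteq> E" for X
    using alternating_rank_sum_nonneg[of m r X, OF flag'[OF _ _ that]]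
    by (simp add: alternating_rank_sum_def)
  have "alternating_rank_sum r m {} = 0"
    using dm by (simp add: alternating_rank_sum_def demi_matroid_def)
  moreover have "alternating_rank_sum r m X \<le> alternating_rank_sum r m (insert x X)
      \<and> alternating_rank_sum r m (insert x X) \<le> alternating_rank_sum r m X + 1"
    if "X \<subseteq> E" "x \<in> E" for X x
    using alternating_rank_sum_insert[of m E r, OF dm' chain' that] by blast
  ultimately show "demi_matroid E ?\<rho>"
    by (rule demi_matroid_nat_of_int[OF \<open>finite E\<close>])
qed

end
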